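(* Let $n\ge 2$ be an integer, $k,c_b>0$, $\rho_0>0$, and let $\lambda_{1,0}\le\cdots\le\lambda_{n,0}$ be real numbers. Consider the system $$\lambda_i'=-\lambda_i^2+\frac{k}{n}(\rho-c_b)\ (i=1,\dots,n),\qquad \rho'=-\rho\lambda,\quad \lambda=\sum_{i=1}^n\lambda_i,\qquad \rho(0)=\rho_0,\ \lambda_i(0)=\lambda_{i,0},$$ and suppose its maximal interval of existence is $[0,t_B)$ with $0<t_B<\infty$. Then there exist integers $1\le J_1\le J_2\le n$ such that $\lim_{t\to t_B^-}\lambda_i(t)=-\infty$ for $1\le i\le J_1$ and $\lim_{t\to t_B^-}\lambda_i(t)=+\infty$ for $J_2<i\le n$.
   Context: Solutions are real-valued and continuously differentiable on $[0,t_B)$. If $J_2=n$ the second condition is vacuous. *)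

theory Defs
  imports "HOL-Analysis.Analysis"
begin

definition is_solution ::
  "nat \<Rightarrow> real \<Rightarrow> real \<Rightarrow> real \<Rightarrow> (nat \<Rightarrow> real) \<Rightarrow> real
    \<Rightarrow> (nat \<Rightarrow> real \<Rightarrow> real) \<Rightarrow> (real \<Rightarrow> real) \<Rightarrow> bool" where
  "is_solution n k cb rho0 lam0 T lam rho \<longleftrightarrow>
     T > 0 \<and>
     rho 0 = rho0 \<and> (\<forall>i\<in>{1..n}. lam i 0 = lam0 i) \<and>
     (\<forall>t\<in>{0..<T}.
        (\<forall>i\<in>{1..n}. (lam i has_real_derivative
              (- (lam i t)\<^sup>2 + k / real n * (rho t - cb))) (at t within {0..<T})) \<and>
        (rho has_real_derivative (- rho t * (\<Sum>i=1..n. lam i t))) (at t within {0..<T}))"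

definition maximal_solution ::
  "nat \<Rightarrow> real \<Rightarrow> real \<Rightarrow> real \<Rightarrow> (nat \<Rightarrow> real) \<Rightarrow> real
    \<Rightarrow> (nat \<Rightarrow> real \<Rightarrow> real) \<Rightarrow> (real \<Rightarrow> real) \<Rightarrow> bool" where
  "maximal_solution n k cb rho0 lam0 T lam rho \<longleftrightarrow>
     is_solution n k cb rho0 lam0 T lam rho \<and>
     \<not> (\<exists>T' lam' rho'. T' > T \<and> is_solution n k cb rho0 lam0 T' lam' rho' \<and>
          (\<forall>t\<in>{0..<T}. rho' t = rho t \<and> (\<forall>i\<in>{1..n}. lam' i t = lam i t)))"

end

theory Submission
  imports Defs
begin

(* Since lam_i - lam_1 solves a linear equation, lam_1 stays the smallest component, and
   rho = rho0 exp (- integral of (lam_1 + ... + lam_n)) stays positive.  If lam_1 were bounded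
   below, then lam_1 + ... + lam_n >= n lam_1 would bound rho, a Riccati barrier would bound
   every lam_i from above, and the bounded solution could be continued beyond t_B by
   Picard-Lindeloef, contradicting maximality.
   Put v = exp (integral of lam_1), so that lam_1 = v'/v, v'' = (k/n) (rho - c_b) v >= - c v with
   c = k c_b / n, and (rho v^n)' <= 0.  If v stayed above some delta > 0, then rho <= rho0/delta^n,
   so lam_1 and then v would be bounded above, v'' >= - c v would bound v' from below, and
   lam_1 = v'/v would be bounded below after all; hence v comes arbitrarily close to 0 near t_B.
   On the other hand, v'' >= - c v keeps v above v(t)/2 on [t, t + tau], with tau depending only
   on A and c, whenever v'(t) >= - A v(t).  So lam_1(t) < - A once t_B - t < tau: lam_1 tends
   to -oo, and J_1 = 1, J_2 = n will do. *)

section \<open>Scalar differential inequalities\<close>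

lemma has_real_derivative_nonneg_imp_le:
  fixes f :: "real \<Rightarrow> real"
  assumes ab: "a \<le> b" and sub: "{a..b} \<subseteq> S"
    and f: "\<And>x. x \<in> {a..b} \<Longrightarrow> (f has_real_derivative f' x) (at x within S)"
    and nonneg: "\<And>x. x \<in> {a<..<b} \<Longrightarrow> 0 \<le> f' x"
  shows "f a \<le> f b"
proof (rule DERIV_nonneg_imp_increasing_open[OF ab])
  show "continuous_on {a..b} f"
    using f sub by (intro DERIV_continuous_on) (auto intro: DERIV_subset)
  fix x assume x: "a < x" "x < b"
  have "at x within S = at x"
    by (rule at_within_open_subset[of x "{a<..<b}"]) (use x sub in auto)
  then show "\<exists>y. (f has_real_derivative y) (at x) \<and> 0 \<le> y"
    using f[of x] nonneg[of x] x by auto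
qed

lemma upper_barrier:
  fixes f :: "real \<Rightarrow> real"
  assumes ab: "a \<le> b" and sub: "{a..b} \<subseteq> S"
    and f: "\<And>x. x \<in> {a..b} \<Longrightarrow> (f has_real_derivative f' x) (at x within S)"
    and init: "f a \<le> B"
    and barrier: "\<And>x. x \<in> {a<..<b} \<Longrightarrow> B < f x \<Longrightarrow> f' x \<le> 0"
  shows "f b \<le> B"
proof (rule ccontr)
  assume "\<not> f b \<le> B"
  \<comment> \<open>After the last time s with f s \<le> B, the function f is nonincreasing.\<close>
  define Z where "Z = {x \<in> {a..b}. f x \<le> B}"
  have "continuous_on {a..b} f"
    using f sub by (intro DERIV_continuous_on) (auto intro: DERIV_subset)
  then have "closed Z" unfolding Z_def
    by (intro continuous_on_closed_Collect_le) (auto intro: continuous_intros)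
  moreover have "Z \<noteq> {}" "bdd_above Z" using ab init by (auto simp: Z_def bdd_above_def)
  ultimately have s: "Sup Z \<in> Z" by (intro closed_contains_Sup)
  define s where "s = Sup Z"
  have sb: "a \<le> s" "s < b" using s \<open>\<not> f b \<le> B\<close> by (auto simp: Z_def s_def less_le)
  have above: "B < f x" if x: "x \<in> {s<..b}" for x
  proof (rule ccontr)
    assume "\<not> B < f x"
    then have "x \<in> Z" using x sb by (auto simp: Z_def)
    then have "x \<le> s" unfolding s_def using \<open>bdd_above Z\<close> by (rule cSup_upper)
    then show False using x by simp
  qed
  have "- f s \<le> - f b"
  proof (rule has_real_derivative_nonneg_imp_le[where f="\<lambda>x. - f x" and f'="\<lambda>x. - f' x"])
    show "((\<lambda>x. - f x) has_real_derivative - f' x) (at x within S)" if "x \<in> {s..b}" for x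
      using f[of x] that sb by (auto intro: derivative_intros)
    show "0 \<le> - f' x" if "x \<in> {s<..<b}" for x
      using barrier[of x] above[of x] that sb by auto
  qed (use sb sub in auto)
  then show False using s \<open>\<not> f b \<le> B\<close> by (auto simp: Z_def s_def)
qed

lemma integral_has_real_derivative_within:
  fixes g :: "real \<Rightarrow> real"
  assumes g: "continuous_on {a..<T} g" and t: "t \<in> {a..<T}"
  shows "((\<lambda>s. integral {a..s} g) has_real_derivative g t) (at t within {a..<T})"
proof -
  define b where "b = (t + T) / 2"
  have b: "t < b" "b < T" using t by (auto simp: b_def)
  have "continuous_on {a..b} g" using g b by (auto intro: continuous_on_subset)
  then have "((\<lambda>s. integral {a..s} g) has_vector_derivative g t) (at t within {a..b})"
    by (rule integral_has_vector_derivative) (use t b in auto)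
  moreover have "at t within {a..<T} = at t within {a..b}"
    by (rule at_within_nhd[where S="{..<b}"]) (use t b in auto)
  ultimately show ?thesis by (simp add: has_real_derivative_iff_has_vector_derivative)
qed

lemma linear_ode_solution_eq:
  fixes x a :: "real \<Rightarrow> real"
  assumes a: "continuous_on {0..<T} a"
    and x: "\<And>t. t \<in> {0..<T} \<Longrightarrow> (x has_real_derivative a t * x t) (at t within {0..<T})"
    and t: "t \<in> {0..<T}"
  shows "x t = x 0 * exp (integral {0..t} a)"
proof -
  define A where "A s = integral {0..s} a" for s
  have "((\<lambda>s. x s * exp (- A s)) has_real_derivative 0) (at s within {0..<T})"
    if s: "s \<in> {0..<T}" for s
  proof -
    have "((\<lambda>s. exp (- A s)) has_real_derivative exp (- A s) * (- a s)) (at s within {0..<T})"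
      using integral_has_real_derivative_within[OF a s] unfolding A_def
      by (auto intro!: derivative_eq_intros)
    from DERIV_mult[OF x[OF s] this] show ?thesis by (simp add: algebra_simps)
  qed
  from has_field_derivative_zero_constant[OF convex_real_interval(7) this]
  obtain C where C: "\<And>s. s \<in> {0..<T} \<Longrightarrow> x s * exp (- A s) = C" by blast
  have "x 0 = C" using C[of 0] t by (simp add: A_def)
  with C[OF t] have "x t * exp (- A t) * exp (A t) = x 0 * exp (A t)" by simp
  then show ?thesis by (simp add: A_def exp_minus_inverse mult.assoc flip: exp_add)
qed

lemma second_order_lower_bound:
  fixes v w :: "real \<Rightarrow> real"
  assumes sb: "s \<le> b"
    and v: "\<And>x. x \<in> {s..b} \<Longrightarrow> (v has_real_derivative w x) (at x within {s..b})"
    and w: "\<And>x. x \<in> {s..b} \<Longrightarrow> (w has_real_derivative w' x) (at x within {s..b})"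
    and w': "\<And>x. x \<in> {s..b} \<Longrightarrow> - C \<le> w' x"
  shows "v s + w s * (b - s) - C * (b - s)\<^sup>2 / 2 \<le> v b"
proof -
  have w_ge: "w s - C * (y - s) \<le> w y" if y: "y \<in> {s..b}" for y
  proof -
    have "w s + C * s \<le> w y + C * y"
    proof (rule has_real_derivative_nonneg_imp_le[where f="\<lambda>z. w z + C * z" and S="{s..b}"])
      show "((\<lambda>z. w z + C * z) has_real_derivative w' x + C) (at x within {s..b})"
        if "x \<in> {s..y}" for x
        using w[of x] that y by (auto intro!: derivative_eq_intros)
      show "0 \<le> w' x + C" if "x \<in> {s<..<y}" for x
        using w'[of x] that y by auto
    qed (use y in auto)
    then show ?thesis by (simp add: algebra_simps)
  qed
  define g where "g z = v z - w s * z + C * (z - s)\<^sup>2 / 2" for z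
  have "g s \<le> g b"
  proof (rule has_real_derivative_nonneg_imp_le[where f=g and S="{s..b}"])
    show "(g has_real_derivative w x - w s + C * (x - s)) (at x within {s..b})"
      if "x \<in> {s..b}" for x
      unfolding g_def[abs_def] using v[OF that] by (auto intro!: derivative_eq_intros)
    show "0 \<le> w x - w s + C * (x - s)" if "x \<in> {s<..<b}" for x
      using w_ge[of x] that by simp
  qed (use sb in auto)
  then show ?thesis by (simp add: g_def algebra_simps)
qed

lemma has_real_derivative_interior_max_eq_0:
  fixes v :: "real \<Rightarrow> real"
  assumes s: "s \<in> {a<..<b}" and max: "\<And>y. y \<in> {a..b} \<Longrightarrow> v y \<le> v s"
    and v: "(v has_real_derivative w) (at s within {a..b})"
  shows "w = 0"
proof -
  have "at s within {a..b} = at s"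
    by (rule at_within_open_subset[of s "{a<..<b}"]) (use s in auto)
  then have "(v has_real_derivative w) (at s)" using v by simp
  then show ?thesis
    by (rule DERIV_local_max[of _ _ _ "min (s - a) (b - s)"])
      (use s max in \<open>auto simp: abs_less_iff\<close>)
qed

lemma second_order_no_fast_decay:
  fixes v w :: "real \<Rightarrow> real"
  assumes ab: "a \<le> b" and pos: "0 < v a" and c: "0 \<le> c" and A: "0 \<le> A"
    and v: "\<And>x. x \<in> {a..b} \<Longrightarrow> (v has_real_derivative w x) (at x within {a..b})"
    and w: "\<And>x. x \<in> {a..b} \<Longrightarrow> (w has_real_derivative w' x) (at x within {a..b})"
    and w': "\<And>x. x \<in> {a..b} \<Longrightarrow> - c * v x \<le> w' x"
    and init: "- A * v a \<le> w a"
    and short: "A * (b - a) \<le> 1/4" "c * (b - a)\<^sup>2 \<le> 1/2"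
  shows "v a / 2 \<le> v b"
proof -
  \<comment> \<open>Expand v to second order around the point s where it is maximal.\<close>
  have "continuous_on {a..b} v" using v by (rule DERIV_continuous_on)
  then obtain s where s: "s \<in> {a..b}" and max: "\<And>y. y \<in> {a..b} \<Longrightarrow> v y \<le> v s"
    using continuous_attains_sup[of "{a..b}" v] ab by auto
  have "v a \<le> v s" using max ab by simp
  show ?thesis
  proof (cases "s = b")
    case False
    then have sb: "s < b" using s by simp
    have ws: "- A * v s \<le> w s"
    proof (cases "s = a")
      case False
      then have "w s = 0"
        using has_real_derivative_interior_max_eq_0[OF _ max v[OF s]] s sb by simp
      then show ?thesis using A pos \<open>v a \<le> v s\<close> by simp
    qed (use init in simp)
    define \<sigma> where "\<sigma> = b - s"
    have \<sigma>: "0 \<le> \<sigma>" "A * \<sigma> \<le> 1/4" "c * \<sigma>\<^sup>2 \<le> 1/2"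
      using s sb A c short mult_left_mono[of \<sigma> "b - a" A] mult_left_mono[of "\<sigma>\<^sup>2" "(b - a)\<^sup>2" c]
        power_mono[of \<sigma> "b - a" 2] by (auto simp: \<sigma>_def)
    have "v s + w s * \<sigma> - (c * v s) * \<sigma>\<^sup>2 / 2 \<le> v b"
      unfolding \<sigma>_def
    proof (rule second_order_lower_bound[OF less_imp_le[OF sb]])
      fix x assume x: "x \<in> {s..b}"
      then have x': "x \<in> {a..b}" using s by auto
      show "(v has_real_derivative w x) (at x within {s..b})"
        "(w has_real_derivative w' x) (at x within {s..b})"
        using v[OF x'] w[OF x'] s by (auto intro: DERIV_subset)
      show "- (c * v s) \<le> w' x" using w'[OF x'] mult_left_mono[OF max[OF x'] c] by linarith
    qed
    moreover have "- A * v s * \<sigma> \<le> w s * \<sigma>" using ws \<sigma> by (intro mult_right_mono)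
    moreover have "0 \<le> v s" using pos \<open>v a \<le> v s\<close> by simp
    then have "v s * (A * \<sigma>) \<le> v s * (1/4)" "v s * (c * \<sigma>\<^sup>2) \<le> v s * (1/2)"
      using mult_left_mono \<sigma> by blast+
    ultimately show ?thesis using \<open>v a \<le> v s\<close> by (simp add: algebra_simps)
  qed (use \<open>v a \<le> v s\<close> pos in simp)
qed

section \<open>Autonomous differential equations in Banach spaces\<close>

lemma norm_diff_le_vector_derivative_bound:
  fixes f :: "real \<Rightarrow> 'a::real_normed_vector"
  assumes f: "\<And>s. s \<in> {a..b} \<Longrightarrow> (f has_vector_derivative f' s) (at s within {a..b})"
    and bound: "\<And>s. s \<in> {a..b} \<Longrightarrow> norm (f' s) \<le> B"
    and t: "t \<in> {a..b}"
  shows "norm (f t - f a) \<le> B * (t - a)"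
proof -
  have "onorm (\<lambda>h. h *\<^sub>R f' s) \<le> B" if "s \<in> {a..b}" for s
    using bound[OF that] onorm_scaleR_left[OF bounded_linear_ident, of "f' s"]
    by (simp add: onorm_id)
  then have "norm (f t - f a) \<le> B * norm (t - a)"
    using f t by (intro differentiable_bound[OF convex_real_interval(5)])
      (auto simp: has_vector_derivative_def)
  then show ?thesis using t by simp
qed

lemma ode_difference_halves:
  fixes F :: "'a::real_normed_vector \<Rightarrow> 'a" and y z :: "real \<Rightarrow> 'a"
  assumes lip: "L-lipschitz_on S F" and short: "(b - a) * L \<le> 1/2"
    and y: "\<And>t. t \<in> {a..b} \<Longrightarrow> y t \<in> S \<and> (y has_vector_derivative F (y t)) (at t within {a..b})"
    and z: "\<And>t. t \<in> {a..b} \<Longrightarrow> z t \<in> S \<and> (z has_vector_derivative F (z t)) (at t within {a..b})"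
    and init: "y a = z a"
    and D: "\<And>s. s \<in> {a..b} \<Longrightarrow> norm (y s - z s) \<le> D"
    and t: "t \<in> {a..b}"
  shows "norm (y t - z t) \<le> D / 2"
proof -
  have L: "0 \<le> L" using lip by (rule lipschitz_on_nonneg)
  have "a \<in> {a..b}" using t by simp
  from D[OF this] have D0: "0 \<le> D" using norm_ge_zero[of "y a - z a"] by linarith
  have "norm ((y t - z t) - (y a - z a)) \<le> L * D * (t - a)"
  proof (rule norm_diff_le_vector_derivative_bound[OF _ _ t])
    fix u assume u: "u \<in> {a..b}"
    show "((\<lambda>s. y s - z s) has_vector_derivative F (y u) - F (z u)) (at u within {a..b})"
      using y[OF u] z[OF u] by (intro has_vector_derivative_diff) auto
    have "norm (F (y u) - F (z u)) \<le> L * norm (y u - z u)"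
      using lipschitz_on_normD[OF lip] y[OF u] z[OF u] by blast
    also have "\<dots> \<le> L * D" using D[OF u] L by (rule mult_left_mono)
    finally show "norm (F (y u) - F (z u)) \<le> L * D" .
  qed
  also have "\<dots> \<le> L * D * (b - a)" using t L D0 by (intro mult_left_mono) auto
  also have "\<dots> = D * ((b - a) * L)" by simp
  also have "\<dots> \<le> D * (1/2)" using D0 short by (intro mult_left_mono) auto
  finally show ?thesis using init by simp
qed

lemma ode_unique_short:
  fixes F :: "'a::real_normed_vector \<Rightarrow> 'a" and y z :: "real \<Rightarrow> 'a"
  assumes lip: "L-lipschitz_on S F" and short: "(b - a) * L \<le> 1/2"
    and y: "\<And>t. t \<in> {a..b} \<Longrightarrow> y t \<in> S \<and> (y has_vector_derivative F (y t)) (at t within {a..b})"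
    and z: "\<And>t. t \<in> {a..b} \<Longrightarrow> z t \<in> S \<and> (z has_vector_derivative F (z t)) (at t within {a..b})"
    and init: "y a = z a"
    and t: "t \<in> {a..b}"
  shows "y t = z t"
proof -
  have "continuous_on {a..b} (\<lambda>s. y s - z s)"
    unfolding continuous_on_eq_continuous_within
    using y z by (blast intro: has_vector_derivative_continuous has_vector_derivative_diff)
  then have "bounded ((\<lambda>s. y s - z s) ` {a..b})"
    by (intro compact_imp_bounded compact_continuous_image compact_Icc)
  then obtain D where D: "\<And>s. s \<in> {a..b} \<Longrightarrow> norm (y s - z s) \<le> D"
    unfolding bounded_iff by blast
  have halved: "norm (y s - z s) \<le> D / 2^m" if "s \<in> {a..b}" for s m
    using that
  proof (induction m arbitrary: s)
    case (Suc m)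
    then show ?case
      using ode_difference_halves[OF lip short y z init, of "D / 2^m"] by (simp add: mult.commute)
  qed (use D in simp)
  have "(\<lambda>m. D / 2^m) \<longlonglongrightarrow> 0" by (rule LIMSEQ_divide_realpow_zero) simp
  then have "norm (y t - z t) \<le> 0" using halved[OF t] by (intro LIMSEQ_le_const) auto
  then show ?thesis by simp
qed

locale picard_iteration =
  fixes F :: "'a::banach \<Rightarrow> 'a" and p :: 'a and r L M a h :: real
  assumes lipschitz: "L-lipschitz_on (cball p r) F"
    and bounded: "\<And>x. x \<in> cball p r \<Longrightarrow> norm (F x) \<le> M"
    and r_nonneg: "0 \<le> r" and h_pos: "0 < h" and h_M: "h * M \<le> r" and h_L: "h * L \<le> 1/2"
begin

lemma L_nonneg: "0 \<le> L"
  using lipschitz by (rule lipschitz_on_nonneg)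

lemma M_nonneg: "0 \<le> M"
proof -
  have "norm (F p) \<le> M" using bounded r_nonneg by simp
  then show ?thesis using norm_ge_zero[of "F p"] by linarith
qed

definition curves_in_ball :: "(real \<Rightarrow>\<^sub>C 'a) set" where
  "curves_in_ball = {y :: real \<Rightarrow>\<^sub>C 'a. \<forall>t\<in>{a..a+h}. y t \<in> cball p r}"

lemma continuous_on_F_curve:
  "y \<in> curves_in_ball \<Longrightarrow> continuous_on {a..a+h} (\<lambda>s. F (y s))"
  unfolding curves_in_ball_def
  by (intro continuous_on_compose2[OF lipschitz_on_continuous_on[OF lipschitz]])
    (auto intro: continuous_on_subset)

lemma norm_integral_F_curve_le:
  assumes y: "y \<in> curves_in_ball" and u: "u \<in> {a..a+h}"
  shows "norm (integral {a..u} (\<lambda>s. F (y s))) \<le> M * h"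
proof -
  have "norm (integral {a..u} (\<lambda>s. F (y s))) \<le> M * (u - a)"
    using y u
    by (intro integral_bound continuous_on_subset[OF continuous_on_F_curve[OF y]] bounded)
      (auto simp: curves_in_ball_def)
  also have "\<dots> \<le> M * h" using u M_nonneg by (intro mult_left_mono) auto
  finally show ?thesis .
qed

\<comment> \<open>Integrating up to the point of [a, a + h] nearest to t makes the Picard operator produce
  bounded continuous functions on the whole real line.\<close>
definition clamp :: "real \<Rightarrow> real" where
  "clamp t = min (a + h) (max a t)"

lemma clamp_in: "clamp t \<in> {a..a+h}"
  using h_pos by (auto simp: clamp_def)

definition picard :: "(real \<Rightarrow>\<^sub>C 'a) \<Rightarrow> (real \<Rightarrow>\<^sub>C 'a)" where
  "picard y = Bcontfun (\<lambda>t. p + integral {a..clamp t} (\<lambda>s. F (y s)))"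

lemma picard_apply:
  assumes y: "y \<in> curves_in_ball"
  shows "picard y t = p + integral {a..clamp t} (\<lambda>s. F (y s))"
proof -
  have "(\<lambda>t. p + integral {a..clamp t} (\<lambda>s. F (y s))) \<in> bcontfun"
  proof (rule bcontfun_normI)
    have "continuous_on UNIV clamp" unfolding clamp_def by (intro continuous_intros)
    then show "continuous_on UNIV (\<lambda>t. p + integral {a..clamp t} (\<lambda>s. F (y s)))"
      by (intro continuous_intros continuous_on_compose2[OF indefinite_integral_continuous_1
            [OF integrable_continuous_interval[OF continuous_on_F_curve[OF y]]]])
        (use clamp_in in auto)
    show "norm (p + integral {a..clamp t} (\<lambda>s. F (y s))) \<le> norm p + M * h" for t
      using norm_integral_F_curve_le[OF y clamp_in]
      by (metis add_left_mono norm_triangle_ineq order_trans)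
  qed
  then show ?thesis by (simp add: picard_def Bcontfun_inverse)
qed

lemma picard_curves_in_ball: "picard ` curves_in_ball \<subseteq> curves_in_ball"
proof safe
  fix y assume y: "y \<in> curves_in_ball"
  have "dist p (picard y t) \<le> r" for t
    using picard_apply[OF y] norm_integral_F_curve_le[OF y clamp_in, of t] h_M
    by (simp add: dist_norm mult.commute)
  then show "picard y \<in> curves_in_ball" by (simp add: curves_in_ball_def)
qed

lemma picard_contraction:
  assumes yz: "y \<in> curves_in_ball" "z \<in> curves_in_ball"
  shows "dist (picard y) (picard z) \<le> (1/2) * dist y z"
proof (rule dist_bound)
  fix t
  have cont: "continuous_on {a..clamp t} (\<lambda>s. F (x s))" if "x \<in> curves_in_ball" for x
    using clamp_in[of t] by (intro continuous_on_subset[OF continuous_on_F_curve[OF that]]) auto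
  have "dist (picard y t) (picard z t) = norm (integral {a..clamp t} (\<lambda>s. F (y s) - F (z s)))"
    using yz cont by (simp add: picard_apply dist_norm integral_diff integrable_continuous_interval)
  also have "\<dots> \<le> (L * dist y z) * (clamp t - a)"
  proof (rule integral_bound)
    fix s assume "s \<in> {a..clamp t}"
    then have s: "s \<in> {a..a+h}" using clamp_in[of t] by auto
    have "norm (F (y s) - F (z s)) \<le> L * norm (y s - z s)"
      using lipschitz_on_normD[OF lipschitz] yz s by (auto simp: curves_in_ball_def)
    also have "\<dots> \<le> L * dist y z"
      using dist_bounded[of y s z] L_nonneg by (simp add: dist_norm mult_left_mono)
    finally show "norm (F (y s) - F (z s)) \<le> L * dist y z" .
  qed (use clamp_in[of t] cont yz in \<open>auto intro: continuous_intros\<close>)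
  also have "\<dots> \<le> (L * dist y z) * h"
    using clamp_in[of t] L_nonneg by (intro mult_left_mono) auto
  also have "\<dots> = (h * L) * dist y z" by simp
  also have "\<dots> \<le> (1/2) * dist y z" using h_L by (intro mult_right_mono) auto
  finally show "dist (picard y t) (picard z t) \<le> (1/2) * dist y z" .
qed

lemma closed_curves_in_ball: "closed curves_in_ball"
proof -
  have cont: "continuous_on UNIV (\<lambda>y :: real \<Rightarrow>\<^sub>C 'a. y t)" for t
    by (rule lipschitz_on_continuous_on[where L=1]) (auto simp: lipschitz_on_def dist_bounded)
  have "closed ((\<lambda>y :: real \<Rightarrow>\<^sub>C 'a. y t) -` cball p r)" for t
    using continuous_closed_preimage[OF cont closed_UNIV closed_cball] by simp
  moreover have "curves_in_ball = (\<Inter>t\<in>{a..a+h}. (\<lambda>y :: real \<Rightarrow>\<^sub>C 'a. y t) -` cball p r)"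
    by (auto simp: curves_in_ball_def)
  ultimately show ?thesis by (simp add: closed_INT)
qed

lemma ode_solution_exists:
  obtains y where "y a = p"
    and "\<And>t. t \<in> {a..a+h} \<Longrightarrow>
      y t \<in> cball p r \<and> (y has_vector_derivative F (y t)) (at t within {a..a+h})"
proof -
  have "const_bcontfun p \<in> curves_in_ball" using r_nonneg by (simp add: curves_in_ball_def)
  then have "\<exists>!y\<in>curves_in_ball. picard y = y"
    using picard_curves_in_ball picard_contraction closed_curves_in_ball
    by (intro Banach_fix[where c="1/2"]) (auto simp: complete_eq_closed)
  then obtain y where y: "y \<in> curves_in_ball" "picard y = y" by blast
  have y_eq: "y t = p + integral {a..t} (\<lambda>s. F (y s))" if "t \<in> {a..a+h}" for t
    using picard_apply[OF y(1), of t] y(2) that by (simp add: clamp_def)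
  show ?thesis
  proof
    show "y a = p" using y_eq[of a] h_pos by simp
    fix t assume t: "t \<in> {a..a+h}"
    have "((\<lambda>u. p + integral {a..u} (\<lambda>s. F (y s))) has_vector_derivative F (y t))
        (at t within {a..a+h})"
      using integral_has_vector_derivative[OF continuous_on_F_curve[OF y(1)] t]
      by (intro derivative_eq_intros) auto
    then have "(y has_vector_derivative F (y t)) (at t within {a..a+h})"
      by (rule has_vector_derivative_transform_within[where d=1]) (use t y_eq in auto)
    then show "y t \<in> cball p r \<and> (y has_vector_derivative F (y t)) (at t within {a..a+h})"
      using y(1) t by (simp add: curves_in_ball_def)
  qed
qed

end

lemma ode_solution_glue:
  fixes F :: "'a::real_normed_vector \<Rightarrow> 'a"
  assumes X: "\<And>t. t \<in> {0..<T} \<Longrightarrow> (X has_vector_derivative F (X t)) (at t within {0..<T})"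
    and Y: "\<And>t. t \<in> {a..b} \<Longrightarrow> (Y has_vector_derivative F (Y t)) (at t within {a..b})"
    and ab: "0 \<le> a" "a < T" "T < b"
    and agree: "\<And>t. t \<in> {a..<T} \<Longrightarrow> X t = Y t"
    and t: "t \<in> {0..<b}"
  defines "E \<equiv> \<lambda>s. if s < T then X s else Y s"
  shows "(E has_vector_derivative F (E t)) (at t within {0..<b})"
proof (cases "t < T")
  case True
  have "at t within {0..<b} = at t within {0..<T}"
    by (rule at_within_nhd[where S="{..<T}"]) (use True ab in auto)
  then have "(X has_vector_derivative F (X t)) (at t within {0..<b})"
    using X True t by simp
  then have "(E has_vector_derivative F (X t)) (at t within {0..<b})"
    by (rule has_vector_derivative_transform_within[where d="T - t"])
      (use True t in \<open>auto simp: E_def dist_real_def\<close>)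
  then show ?thesis using True by (simp add: E_def)
next
  case False
  have "at t within {0..<b} = at t within {a..b}"
    by (rule at_within_nhd[where S="{a<..<b}"]) (use False ab t in auto)
  then have "(Y has_vector_derivative F (Y t)) (at t within {0..<b})"
    using Y False ab t by simp
  then have "(E has_vector_derivative F (Y t)) (at t within {0..<b})"
    by (rule has_vector_derivative_transform_within[where d="t - a"])
      (use False ab t agree in \<open>auto simp: E_def dist_real_def\<close>)
  then show ?thesis using False by (simp add: E_def)
qed

lemma lipschitz_on_cball_norm_le:
  fixes F :: "'a::real_normed_vector \<Rightarrow> 'b::real_normed_vector"
  assumes lip: "L-lipschitz_on (cball 0 R) F" and x: "x \<in> cball 0 R"
  shows "norm (F x) \<le> norm (F 0) + L * R"
proof -
  have "0 \<le> R" using x by (simp add: order_trans[OF norm_ge_zero])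
  have "norm (F x) \<le> norm (F 0) + norm (F x - F 0)" by (rule norm_triangle_sub)
  also have "\<dots> \<le> norm (F 0) + L * norm x"
    using lipschitz_on_normD[OF lip x, of 0] \<open>0 \<le> R\<close> by simp
  also have "\<dots> \<le> norm (F 0) + L * R"
    using x lipschitz_on_nonneg[OF lip] by (simp add: mult_left_mono)
  finally show ?thesis .
qed

lemma ode_solutions_agree_short:
  fixes F :: "'a::real_normed_vector \<Rightarrow> 'a"
  assumes lip: "L-lipschitz_on (cball (X a) 1) F"
    and X: "\<And>t. t \<in> {a..<T} \<Longrightarrow> (X has_vector_derivative F (X t)) (at t within {a..<T})"
    and X_speed: "\<And>t. t \<in> {a..<T} \<Longrightarrow> norm (F (X t)) \<le> M"
    and Y: "\<And>t. t \<in> {a..b} \<Longrightarrow>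
      Y t \<in> cball (X a) 1 \<and> (Y has_vector_derivative F (Y t)) (at t within {a..b})"
    and init: "Y a = X a" and Tb: "T \<le> b"
    and short: "(T - a) * M \<le> 1" "(T - a) * L \<le> 1/2"
    and t: "t \<in> {a..<T}"
  shows "X t = Y t"
proof (rule ode_unique_short[OF lip])
  have sub: "{a..t} \<subseteq> {a..<T}" "{a..t} \<subseteq> {a..b}" using t Tb by auto
  have L: "0 \<le> L" using lip by (rule lipschitz_on_nonneg)
  show "(t - a) * L \<le> 1/2" using t L short(2) mult_right_mono[of "t - a" "T - a" L] by simp
  fix s assume "s \<in> {a..t}"
  then have s: "s \<in> {a..<T}" "s \<in> {a..b}" using sub by auto
  have "norm (X s - X a) \<le> M * (s - a)"
  proof (rule norm_diff_le_vector_derivative_bound)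
    fix u assume "u \<in> {a..s}"
    then have u: "u \<in> {a..<T}" using s by auto
    have "{a..s} \<subseteq> {a..<T}" using s by auto
    then show "(X has_vector_derivative F (X u)) (at u within {a..s})"
      by (rule has_vector_derivative_within_subset[OF X[OF u]])
    show "norm (F (X u)) \<le> M" using X_speed[OF u] .
  qed (use s in auto)
  moreover have "a \<in> {a..<T}" using s by auto
  from X_speed[OF this] have "0 \<le> M" using norm_ge_zero[of "F (X a)"] by linarith
  then have "M * (s - a) \<le> (T - a) * M"
    using s mult_left_mono[of "s - a" "T - a" M] by (simp add: mult.commute)
  ultimately have "norm (X s - X a) \<le> 1" using short(1) by linarith
  then show "X s \<in> cball (X a) 1 \<and> (X has_vector_derivative F (X s)) (at s within {a..t})"
    using has_vector_derivative_within_subset[OF X sub(1)] s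
    by (simp add: dist_norm norm_minus_commute)
  show "Y s \<in> cball (X a) 1 \<and> (Y has_vector_derivative F (Y s)) (at s within {a..t})"
    using Y[OF s(2)] has_vector_derivative_within_subset[OF _ sub(2)] by blast
qed (use init t in auto)

lemma ode_bounded_solution_extends:
  fixes F :: "'a::banach \<Rightarrow> 'a"
  assumes lip: "\<And>R. \<exists>L. L-lipschitz_on (cball 0 R) F"
    and X: "\<And>t. t \<in> {0..<T} \<Longrightarrow> (X has_vector_derivative F (X t)) (at t within {0..<T})"
    and bounded: "\<And>t. t \<in> {0..<T} \<Longrightarrow> norm (X t) \<le> R"
    and T: "0 < T"
  obtains T' Y where "T < T'"
    and "\<And>t. t \<in> {0..<T'} \<Longrightarrow> (Y has_vector_derivative F (Y t)) (at t within {0..<T'})"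
    and "\<And>t. t \<in> {0..<T} \<Longrightarrow> Y t = X t"
proof -
  obtain L where lipL: "L-lipschitz_on (cball 0 (R + 1)) F" using lip by blast
  define M where "M = norm (F 0) + L * (R + 1)"
  have L: "0 \<le> L" using lipL by (rule lipschitz_on_nonneg)
  have "norm (X 0) \<le> R" using bounded T by simp
  then have "0 \<le> R + 1" using norm_ge_zero[of "X 0"] by linarith
  then have M: "0 \<le> M" using L by (simp add: M_def)
  have speed: "norm (F (X t)) \<le> M" if "t \<in> {0..<T}" for t
    using lipschitz_on_cball_norm_le[OF lipL] bounded[OF that] by (simp add: M_def)
  define h where "h = 1 / (2 * L + M + 1)"
  have h: "0 < h" "h * M \<le> 1" "h * L \<le> 1/2" using L M by (auto simp: h_def field_simps)
  \<comment> \<open>Restart at a point a within h/2 of T: the local solution through X a lives beyond T.\<close>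
  define a where "a = max 0 (T - h/2)"
  have a: "0 \<le> a" "a < T" "T < a + h" "T - a \<le> h" using T h by (auto simp: a_def)
  have ball: "cball (X a) 1 \<subseteq> cball 0 (R + 1)"
  proof
    fix x assume "x \<in> cball (X a) 1"
    then have "norm (x - X a) \<le> 1" by (simp add: dist_norm norm_minus_commute)
    moreover have "norm x \<le> norm (X a) + norm (x - X a)" by (rule norm_triangle_sub)
    moreover have "norm (X a) \<le> R" using bounded a by simp
    ultimately show "x \<in> cball 0 (R + 1)" by simp
  qed
  note lip_ball = lipschitz_on_subset[OF lipL ball]
  interpret picard: picard_iteration F "X a" 1 L M a h
    using lip_ball lipschitz_on_cball_norm_le[OF lipL] ball h by unfold_locales (auto simp: M_def)
  obtain Y where Y_a: "Y a = X a"
    and Y: "\<And>t. t \<in> {a..a+h} \<Longrightarrow> Y t \<in> cball (X a) 1 \<and>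
      (Y has_vector_derivative F (Y t)) (at t within {a..a+h})"
    using picard.ode_solution_exists by blast
  have short: "(T - a) * M \<le> 1" "(T - a) * L \<le> 1/2"
    using a h mult_right_mono[OF a(4) M] mult_right_mono[OF a(4) L] by auto
  have late: "{a..<T} \<subseteq> {0..<T}" using a by auto
  then have X_late: "(X has_vector_derivative F (X t)) (at t within {a..<T})" if "t \<in> {a..<T}" for t
    using has_vector_derivative_within_subset[OF X] that by blast
  have speed_late: "norm (F (X t)) \<le> M" if "t \<in> {a..<T}" for t
    using speed late that by blast
  have agree: "X t = Y t" if "t \<in> {a..<T}" for t
    by (rule ode_solutions_agree_short[OF lip_ball X_late speed_late Y Y_a less_imp_le[OF a(3)]
          short that])
  show ?thesis
  proof
    show "T < a + h" using a by simp
    show "((\<lambda>s. if s < T then X s else Y s) has_vector_derivative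
        F (if t < T then X t else Y t)) (at t within {0..<a + h})" if "t \<in> {0..<a + h}" for t
      using ode_solution_glue[OF X _ a(1-3) agree that] Y by blast
  qed simp
qed

section \<open>The system as a differential equation for bounded sequences\<close>

(* The state (rho, lam_1, ..., lam_n) is stored as a bounded function on nat supported in
   {0..n}, with rho at index 0.  Giving nat the discrete metric makes these functions a Banach
   space that accommodates every dimension n at once. *)

instantiation nat :: metric_space
begin

definition dist_nat :: "nat \<Rightarrow> nat \<Rightarrow> real" where
  "dist_nat m n = of_bool (m \<noteq> n)"

definition uniformity_nat :: "(nat \<times> nat) filter" where
  "uniformity_nat = (INF e\<in>{0<..}. principal {(x, y). dist x y < e})"

instance
proof
  fix U :: "nat set"
  have "eventually (\<lambda>(x', y). x' = x \<longrightarrow> y \<in> U) uniformity" if "x \<in> U" for x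
    unfolding uniformity_nat_def
    by (rule eventually_INF1[of 1]) (use that in \<open>auto simp: eventually_principal dist_nat_def\<close>)
  then show "open U = (\<forall>x\<in>U. eventually (\<lambda>(x', y). x' = x \<longrightarrow> y \<in> U) uniformity)"
    by (simp add: open_discrete)
qed (auto simp: dist_nat_def uniformity_nat_def)

end

instance bcontfun :: (metric_space, banach) banach ..

lemma bounded_linear_apply_bcontfun:
  "bounded_linear (\<lambda>x :: 'a::topological_space \<Rightarrow>\<^sub>C 'b::real_normed_vector. x i)"
  by (rule bounded_linear_intro[where K=1]) (auto simp: norm_bounded)

lemma apply_bcontfun_sum: "apply_bcontfun (\<Sum>a\<in>A. f a) x = (\<Sum>a\<in>A. apply_bcontfun (f a) x)"
  by (induction A rule: infinite_finite_induct) auto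

definition fin_seq :: "nat \<Rightarrow> (nat \<Rightarrow> real) \<Rightarrow> (nat \<Rightarrow>\<^sub>C real)" where
  "fin_seq n g = Bcontfun (\<lambda>i. if i \<le> n then g i else 0)"

lemma fin_seq_apply [simp]: "fin_seq n g i = (if i \<le> n then g i else 0)"
proof -
  have "(\<lambda>i. if i \<le> n then g i else 0) \<in> bcontfun"
  proof (rule bcontfun_normI)
    fix i
    show "norm (if i \<le> n then g i else 0) \<le> (\<Sum>j\<le>n. \<bar>g j\<bar>)"
      by (auto intro: member_le_sum sum_nonneg)
  qed (simp add: continuous_on_discrete)
  then show ?thesis by (simp add: fin_seq_def Bcontfun_inverse)
qed

lemma fin_seq_cong: "(\<And>i. i \<le> n \<Longrightarrow> f i = g i) \<Longrightarrow> fin_seq n f = fin_seq n g"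
  by (rule bcontfun_eqI) simp

lemma has_vector_derivative_fin_seq:
  assumes "\<And>i. i \<le> n \<Longrightarrow> ((\<lambda>t. g i t) has_real_derivative g' i) (at t within S)"
  shows "((\<lambda>t. fin_seq n (\<lambda>i. g i t)) has_vector_derivative fin_seq n g') (at t within S)"
proof -
  define e where "e i = fin_seq n (\<lambda>j. of_bool (i = j))" for i
  have expand: "fin_seq n h = (\<Sum>i\<le>n. h i *\<^sub>R e i)" for h
    by (rule bcontfun_eqI) (simp add: apply_bcontfun_sum e_def)
  have "((\<lambda>t. \<Sum>i\<le>n. g i t *\<^sub>R e i) has_vector_derivative (\<Sum>i\<le>n. g' i *\<^sub>R e i)) (at t within S)"
  proof (rule has_vector_derivative_sum)
    fix i assume "i \<in> {..n}"
    then show "((\<lambda>t. g i t *\<^sub>R e i) has_vector_derivative g' i *\<^sub>R e i) (at t within S)"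
      using has_vector_derivative_scaleR[OF assms has_vector_derivative_const] by simp
  qed
  then show ?thesis by (simp only: expand)
qed

definition sys_state :: "nat \<Rightarrow> (nat \<Rightarrow> real) \<Rightarrow> real \<Rightarrow> (nat \<Rightarrow>\<^sub>C real)" where
  "sys_state n l r = fin_seq n (\<lambda>i. if i = 0 then r else l i)"

definition sys_field :: "nat \<Rightarrow> real \<Rightarrow> real \<Rightarrow> (nat \<Rightarrow>\<^sub>C real) \<Rightarrow> (nat \<Rightarrow>\<^sub>C real)" where
  "sys_field n k cb x =
     sys_state n (\<lambda>i. - (x i)\<^sup>2 + k / real n * (x 0 - cb)) (- x 0 * (\<Sum>j=1..n. x j))"

lemma abs_mult_diff_le:
  fixes a b c d :: real
  assumes "\<bar>b\<bar> \<le> B" "\<bar>c\<bar> \<le> C"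
  shows "\<bar>a * b - c * d\<bar> \<le> \<bar>a - c\<bar> * B + C * \<bar>b - d\<bar>"
proof -
  have "\<bar>a * b - c * d\<bar> = \<bar>(a - c) * b + c * (b - d)\<bar>" by (simp add: algebra_simps)
  also have "\<dots> \<le> \<bar>a - c\<bar> * \<bar>b\<bar> + \<bar>c\<bar> * \<bar>b - d\<bar>" by (metis abs_mult abs_triangle_ineq)
  also have "\<dots> \<le> \<bar>a - c\<bar> * B + C * \<bar>b - d\<bar>"
    using assms by (intro add_mono mult_mono) auto
  finally show ?thesis .
qed

lemma abs_sum_le_card_mult:
  fixes f :: "'a \<Rightarrow> real"
  assumes "\<And>j. j \<in> A \<Longrightarrow> \<bar>f j\<bar> \<le> B"
  shows "\<bar>sum f A\<bar> \<le> real (card A) * B"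
  using sum_abs[of f A] sum_bounded_above[of A "\<lambda>j. \<bar>f j\<bar>" B, OF assms] by linarith

lemma sys_field_component_diff_le:
  fixes x y :: "nat \<Rightarrow>\<^sub>C real"
  assumes k: "0 \<le> k" and R: "0 \<le> R"
    and x: "\<And>j. \<bar>x j\<bar> \<le> R" and y: "\<And>j. \<bar>y j\<bar> \<le> R" and d: "\<And>j. \<bar>x j - y j\<bar> \<le> d"
  shows "\<bar>sys_field n k cb x i - sys_field n k cb y i\<bar> \<le> (2 * (real n + 1) * R + k / real n) * d"
proof -
  have d0: "0 \<le> d" using d[of 0] by linarith
  have kn: "0 \<le> k / real n" using k by simp
  have Rd: "0 \<le> R * d" "0 \<le> k / real n * d" "0 \<le> R * d * real n"
    using R d0 kn by (simp_all only: zero_le_mult_iff) auto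
  consider "n < i" | "i = 0" | "1 \<le> i" "i \<le> n" by linarith
  then show ?thesis
  proof cases
    case 1
    have "0 \<le> 2 * (real n + 1) * R + k / real n" using R kn by simp
    then show ?thesis using 1 mult_nonneg_nonneg[OF _ d0] by (simp add: sys_field_def sys_state_def)
  next
    case 2
    have "\<bar>\<Sum>j=1..n. x j\<bar> \<le> real n * R"
      using abs_sum_le_card_mult[of "{1..n}" "\<lambda>j. x j" R] x by simp
    then have "\<bar>x 0 * (\<Sum>j=1..n. x j) - y 0 * (\<Sum>j=1..n. y j)\<bar>
        \<le> \<bar>x 0 - y 0\<bar> * (real n * R) + R * \<bar>(\<Sum>j=1..n. x j) - (\<Sum>j=1..n. y j)\<bar>"
      using y by (rule abs_mult_diff_le)
    also have "\<dots> \<le> d * (real n * R) + R * (real n * d)"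
      using d R abs_sum_le_card_mult[of "{1..n}" "\<lambda>j. x j - y j" d] Rd
      by (intro add_mono mult_right_mono mult_left_mono) (auto simp: sum_subtractf)
    finally show ?thesis using 2 Rd by (simp add: sys_field_def sys_state_def algebra_simps)
  next
    case 3
    have "\<bar>x i * x i - y i * y i\<bar> \<le> \<bar>x i - y i\<bar> * R + R * \<bar>x i - y i\<bar>"
      using x y by (rule abs_mult_diff_le)
    also have "\<dots> \<le> d * R + R * d" using d R by (intro add_mono mult_right_mono mult_left_mono)
    finally have sq: "\<bar>x i * x i - y i * y i\<bar> \<le> d * R + R * d" .
    have "\<bar>(- (x i)\<^sup>2 + k / real n * (x 0 - cb)) - (- (y i)\<^sup>2 + k / real n * (y 0 - cb))\<bar>
        = \<bar>k / real n * (x 0 - y 0) - (x i * x i - y i * y i)\<bar>"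
      by (simp add: power2_eq_square algebra_simps)
    also have "\<dots> \<le> k / real n * \<bar>x 0 - y 0\<bar> + \<bar>x i * x i - y i * y i\<bar>"
      using abs_triangle_ineq4 kn by (metis abs_mult abs_of_nonneg)
    also have "\<dots> \<le> k / real n * d + (d * R + R * d)"
      using d kn sq by (intro add_mono mult_left_mono)
    finally show ?thesis using 3 Rd by (simp add: sys_field_def sys_state_def algebra_simps)
  qed
qed

lemma sys_field_lipschitz:
  assumes k: "0 \<le> k" and R: "0 \<le> R"
  shows "(2 * (real n + 1) * R + k / real n)-lipschitz_on (cball 0 R) (sys_field n k cb)"
proof (rule lipschitz_onI)
  fix x y :: "nat \<Rightarrow>\<^sub>C real" assume "x \<in> cball 0 R" "y \<in> cball 0 R"
  then have "\<bar>x j\<bar> \<le> R" "\<bar>y j\<bar> \<le> R" for j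
    using norm_bounded[of x j] norm_bounded[of y j] by auto
  moreover have "\<bar>x j - y j\<bar> \<le> dist x y" for j
    using dist_bounded[of x j y] by (simp add: dist_real_def)
  ultimately show "dist (sys_field n k cb x) (sys_field n k cb y)
      \<le> (2 * (real n + 1) * R + k / real n) * dist x y"
    using sys_field_component_diff_le[OF k R] by (intro dist_bound) (simp add: dist_real_def)
qed (use k R in simp)

lemma has_real_derivative_apply_bcontfun:
  fixes X :: "real \<Rightarrow> 'a::topological_space \<Rightarrow>\<^sub>C real"
  shows "(X has_vector_derivative X') F \<Longrightarrow> ((\<lambda>t. X t i) has_real_derivative X' i) F"
  unfolding has_real_derivative_iff_has_vector_derivative
  by (rule bounded_linear.has_vector_derivative[OF bounded_linear_apply_bcontfun])

lemma is_solution_sys_state: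
  assumes sol: "is_solution n k cb rho0 lam0 T lam rho" and t: "t \<in> {0..<T}"
  shows "((\<lambda>t. sys_state n (\<lambda>i. lam i t) (rho t)) has_vector_derivative
      sys_field n k cb (sys_state n (\<lambda>i. lam i t) (rho t))) (at t within {0..<T})"
proof -
  have "(\<Sum>j=1..n. sys_state n (\<lambda>i. lam i t) (rho t) j) = (\<Sum>j=1..n. lam j t)"
    by (intro sum.cong) (auto simp: sys_state_def)
  then have field: "sys_field n k cb (sys_state n (\<lambda>i. lam i t) (rho t)) =
      fin_seq n (\<lambda>i. if i = 0 then - rho t * (\<Sum>j=1..n. lam j t)
        else - (lam i t)\<^sup>2 + k / real n * (rho t - cb))"
    unfolding sys_field_def sys_state_def by (intro fin_seq_cong) simp
  have "((\<lambda>t. fin_seq n (\<lambda>i. if i = 0 then rho t else lam i t)) has_vector_derivative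
      fin_seq n (\<lambda>i. if i = 0 then - rho t * (\<Sum>j=1..n. lam j t)
        else - (lam i t)\<^sup>2 + k / real n * (rho t - cb))) (at t within {0..<T})"
    using sol t by (intro has_vector_derivative_fin_seq) (auto simp: is_solution_def)
  then show ?thesis unfolding field by (simp add: sys_state_def)
qed

lemma sys_field_solution_is_solution:
  assumes T: "0 < T" and init: "Y 0 = sys_state n lam0 rho0"
    and Y: "\<And>t. t \<in> {0..<T} \<Longrightarrow>
      (Y has_vector_derivative sys_field n k cb (Y t)) (at t within {0..<T})"
  shows "is_solution n k cb rho0 lam0 T (\<lambda>i t. Y t i) (\<lambda>t. Y t 0)"
  unfolding is_solution_def
proof (intro conjI ballI)
  fix t assume t: "t \<in> {0..<T}"
  show "((\<lambda>t. Y t i) has_real_derivative - (Y t i)\<^sup>2 + k / real n * (Y t 0 - cb))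
      (at t within {0..<T})"
    if "i \<in> {1..n}" for i
    using has_real_derivative_apply_bcontfun[OF Y[OF t], of i] that
    by (simp add: sys_field_def sys_state_def)
  show "((\<lambda>t. Y t 0) has_real_derivative - Y t 0 * (\<Sum>i=1..n. Y t i)) (at t within {0..<T})"
    using has_real_derivative_apply_bcontfun[OF Y[OF t], of 0]
    by (simp add: sys_field_def sys_state_def)
qed (use T init in \<open>auto simp: sys_state_def\<close>)

lemma maximal_solution_unbounded:
  assumes max: "maximal_solution n k cb rho0 lam0 T lam rho" and k: "0 \<le> k"
    and bounded: "\<And>t. t \<in> {0..<T} \<Longrightarrow> \<bar>rho t\<bar> \<le> R \<and> (\<forall>i\<in>{1..n}. \<bar>lam i t\<bar> \<le> R)"
  shows False
proof -
  have sol: "is_solution n k cb rho0 lam0 T lam rho" using max by (simp add: maximal_solution_def)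
  then have T: "0 < T" by (simp add: is_solution_def)
  define X where "X t = sys_state n (\<lambda>i. lam i t) (rho t)" for t
  have R: "0 \<le> R" using bounded[of 0] T by fastforce
  have X_bounded: "norm (X t) \<le> R" if "t \<in> {0..<T}" for t
    using bounded[OF that] R by (intro norm_bound) (auto simp: X_def sys_state_def)
  have X_deriv: "(X has_vector_derivative sys_field n k cb (X t)) (at t within {0..<T})"
    if "t \<in> {0..<T}" for t
    using is_solution_sys_state[OF sol that] by (simp add: X_def[abs_def])
  have lip: "\<exists>L. L-lipschitz_on (cball 0 R') (sys_field n k cb)" for R'
    using lipschitz_on_subset[OF sys_field_lipschitz[OF k abs_ge_zero] subset_cball[OF abs_ge_self]]
    by blast
  obtain T' Y where T': "T < T'"
    and Y: "\<And>t. t \<in> {0..<T'} \<Longrightarrow>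
      (Y has_vector_derivative sys_field n k cb (Y t)) (at t within {0..<T'})"
    and agree: "\<And>t. t \<in> {0..<T} \<Longrightarrow> Y t = X t"
    using ode_bounded_solution_extends[OF lip X_deriv X_bounded T] by blast
  have "Y 0 = sys_state n lam0 rho0"
    using agree[of 0] T sol unfolding X_def sys_state_def is_solution_def
    by (auto intro: fin_seq_cong)
  then have "is_solution n k cb rho0 lam0 T' (\<lambda>i t. Y t i) (\<lambda>t. Y t 0)"
    using T T' Y by (intro sys_field_solution_is_solution) auto
  moreover have "Y t 0 = rho t \<and> (\<forall>i\<in>{1..n}. Y t i = lam i t)" if "t \<in> {0..<T}" for t
    using agree[OF that] by (auto simp: X_def sys_state_def)
  ultimately show False using max T' unfolding maximal_solution_def by blast
qed

section \<open>Qualitative behaviour of the solution\<close>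

locale riccati_solution =
  fixes n :: nat and k cb rho0 :: real and lam0 :: "nat \<Rightarrow> real" and T :: real
    and lam :: "nat \<Rightarrow> real \<Rightarrow> real" and rho :: "real \<Rightarrow> real"
  assumes solution: "is_solution n k cb rho0 lam0 T lam rho"
    and n_pos: "1 \<le> n" and k_nonneg: "0 \<le> k" and cb_nonneg: "0 \<le> cb" and rho0_pos: "0 < rho0"
    and lam0_first_min: "\<And>i. i \<in> {1..n} \<Longrightarrow> lam0 1 \<le> lam0 i"
begin

definition K :: real where "K = k / real n"

lemma K_nonneg: "0 \<le> K"
  using k_nonneg by (simp add: K_def)

lemma T_pos: "0 < T"
  using solution by (simp add: is_solution_def)

lemma rho_init: "rho 0 = rho0"
  using solution by (simp add: is_solution_def)

lemma lam_init: "i \<in> {1..n} \<Longrightarrow> lam i 0 = lam0 i"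
  using solution by (simp add: is_solution_def)

lemma first_index: "1 \<in> {1..n}"
  using n_pos by simp

lemma lam_deriv:
  "t \<in> {0..<T} \<Longrightarrow> i \<in> {1..n} \<Longrightarrow>
    (lam i has_real_derivative - (lam i t)\<^sup>2 + K * (rho t - cb)) (at t within {0..<T})"
  using solution by (simp add: is_solution_def K_def)

lemma rho_deriv:
  "t \<in> {0..<T} \<Longrightarrow> (rho has_real_derivative - rho t * (\<Sum>i=1..n. lam i t)) (at t within {0..<T})"
  using solution by (simp add: is_solution_def)

lemma continuous_on_lam: "i \<in> {1..n} \<Longrightarrow> continuous_on {0..<T} (lam i)"
  using lam_deriv by (intro DERIV_continuous_on) auto

lemma continuous_on_sum_lam: "continuous_on {0..<T} (\<lambda>t. \<Sum>i=1..n. lam i t)"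
  using continuous_on_lam by (intro continuous_on_sum) auto

lemma integrable_on_initial_segment:
  fixes f :: "real \<Rightarrow> real"
  assumes "continuous_on {0..<T} f" and "t \<in> {0..<T}"
  shows "f integrable_on {0..t}"
  by (rule integrable_continuous_interval, rule continuous_on_subset[OF assms(1)])
    (use assms(2) in auto)

lemma rho_eq: "t \<in> {0..<T} \<Longrightarrow> rho t = rho0 * exp (integral {0..t} (\<lambda>s. - (\<Sum>i=1..n. lam i s)))"
  using linear_ode_solution_eq[of T "\<lambda>s. - (\<Sum>i=1..n. lam i s)" rho t]
    continuous_on_minus[OF continuous_on_sum_lam] rho_deriv rho_init
  by (simp add: mult.commute)

lemma rho_pos: "t \<in> {0..<T} \<Longrightarrow> 0 < rho t"
  using rho_eq rho0_pos by simp

lemma lam_first_le: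
  assumes t: "t \<in> {0..<T}" and i: "i \<in> {1..n}"
  shows "lam 1 t \<le> lam i t"
proof -
  \<comment> \<open>The difference of two components solves a linear equation, so it keeps its sign.\<close>
  have "lam i t - lam 1 t = (lam i 0 - lam 1 0) * exp (integral {0..t} (\<lambda>s. - (lam i s + lam 1 s)))"
  proof (rule linear_ode_solution_eq[OF _ _ t])
    show "continuous_on {0..<T} (\<lambda>s. - (lam i s + lam 1 s))"
      using continuous_on_lam[OF i] continuous_on_lam[OF first_index] by (intro continuous_intros)
    show "((\<lambda>s. lam i s - lam 1 s) has_real_derivative - (lam i s + lam 1 s) * (lam i s - lam 1 s))
        (at s within {0..<T})" if "s \<in> {0..<T}" for s
      by (rule DERIV_cong[OF DERIV_diff[OF lam_deriv[OF that i] lam_deriv[OF that first_index]]])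
        (simp add: algebra_simps power2_eq_square)
  qed
  moreover have "0 \<le> lam i 0 - lam 1 0" using lam0_first_min[OF i] lam_init i first_index by simp
  ultimately have "0 \<le> lam i t - lam 1 t" by (metis exp_ge_zero mult_nonneg_nonneg)
  then show ?thesis by simp
qed

lemma sum_lam_ge: "t \<in> {0..<T} \<Longrightarrow> real n * lam 1 t \<le> (\<Sum>i=1..n. lam i t)"
  using sum_mono[of "{1..n}" "\<lambda>_. lam 1 t" "\<lambda>i. lam i t"] lam_first_le by simp

lemma lam_le_of_rho_le:
  assumes P: "\<And>s. s \<in> {0..<T} \<Longrightarrow> rho s \<le> P" and i: "i \<in> {1..n}" and t: "t \<in> {0..<T}"
  shows "lam i t \<le> max (lam0 i) (sqrt (K * P))"
proof (rule upper_barrier[where f="lam i" and a=0 and b=t and S="{0..<T}"])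
  show "(lam i has_real_derivative - (lam i x)\<^sup>2 + K * (rho x - cb)) (at x within {0..<T})"
    if "x \<in> {0..t}" for x
    using lam_deriv[OF _ i, of x] that t by auto
  fix x assume x: "x \<in> {0<..<t}" and above: "max (lam0 i) (sqrt (K * P)) < lam i x"
  have "x \<in> {0..<T}" using x t by auto
  then have "0 < rho x" "rho x \<le> P" using P rho_pos by auto
  then have "0 \<le> P" by linarith
  have KP: "0 \<le> K * P" "K * (rho x - cb) \<le> K * P"
    using \<open>0 \<le> P\<close> \<open>rho x \<le> P\<close> cb_nonneg
    by (intro mult_nonneg_nonneg[OF K_nonneg] mult_left_mono[OF _ K_nonneg], linarith)+
  have "sqrt (K * P) \<le> lam i x" using above by simp
  then have "(sqrt (K * P))\<^sup>2 \<le> (lam i x)\<^sup>2" by (rule power_mono) (use KP in simp)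
  then have "K * P \<le> (lam i x)\<^sup>2" using KP by simp
  then show "- (lam i x)\<^sup>2 + K * (rho x - cb) \<le> 0" using KP by linarith
qed (use lam_init[OF i] t in auto)

lemma rho_le_of_lam_first_ge:
  assumes m: "\<And>s. s \<in> {0..<T} \<Longrightarrow> m \<le> lam 1 s" and t: "t \<in> {0..<T}"
  shows "rho t \<le> rho0 * exp (real n * \<bar>m\<bar> * T)"
proof -
  have "integral {0..t} (\<lambda>s. - (\<Sum>i=1..n. lam i s)) \<le> integral {0..t} (\<lambda>_. real n * \<bar>m\<bar>)"
  proof (rule integral_le)
    show "(\<lambda>s. - (\<Sum>i=1..n. lam i s)) integrable_on {0..t}"
      using continuous_on_minus[OF continuous_on_sum_lam] t by (rule integrable_on_initial_segment)
    fix s assume "s \<in> {0..t}"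
    then have "s \<in> {0..<T}" using t by auto
    then have "real n * m \<le> real n * lam 1 s" "real n * lam 1 s \<le> (\<Sum>i=1..n. lam i s)"
      using m sum_lam_ge by (auto intro: mult_left_mono)
    moreover have "- (real n * \<bar>m\<bar>) \<le> real n * m"
      using mult_left_mono[of "- \<bar>m\<bar>" m "real n"] by simp
    ultimately show "- (\<Sum>i=1..n. lam i s) \<le> real n * \<bar>m\<bar>" by linarith
  qed auto
  also have "\<dots> = real n * \<bar>m\<bar> * t" using t by simp
  also have "\<dots> \<le> real n * \<bar>m\<bar> * T" using t by (intro mult_left_mono) auto
  finally show ?thesis using rho_eq[OF t] rho0_pos by simp
qed

lemma bounded_of_lam_first_ge:
  assumes m: "\<And>s. s \<in> {0..<T} \<Longrightarrow> m \<le> lam 1 s"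
  shows "\<exists>R. \<forall>t\<in>{0..<T}. \<bar>rho t\<bar> \<le> R \<and> (\<forall>i\<in>{1..n}. \<bar>lam i t\<bar> \<le> R)"
proof -
  define P where "P = rho0 * exp (real n * \<bar>m\<bar> * T)"
  define B where "B i = max (lam0 i) (sqrt (K * P))" for i
  define R where "R = P + \<bar>m\<bar> + (\<Sum>j=1..n. \<bar>B j\<bar>)"
  have rho_le: "\<bar>rho t\<bar> \<le> P" if "t \<in> {0..<T}" for t
    using rho_le_of_lam_first_ge[OF m that] rho_pos[OF that] by (simp add: P_def)
  have lam_le: "\<bar>lam i t\<bar> \<le> \<bar>m\<bar> + \<bar>B i\<bar>" if "t \<in> {0..<T}" "i \<in> {1..n}" for t i
    using m[of t] lam_first_le[of t i] lam_le_of_rho_le[of P i t] rho_le that unfolding B_def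
    by fastforce
  have B_le: "\<bar>B i\<bar> \<le> (\<Sum>j=1..n. \<bar>B j\<bar>)" if "i \<in> {1..n}" for i
    using member_le_sum[of i "{1..n}" "\<lambda>j. \<bar>B j\<bar>"] that by simp
  have "0 \<le> (\<Sum>j=1..n. \<bar>B j\<bar>)" by (simp add: sum_nonneg)
  then have "\<bar>rho t\<bar> \<le> R \<and> (\<forall>i\<in>{1..n}. \<bar>lam i t\<bar> \<le> R)" if t: "t \<in> {0..<T}" for t
    using rho_le[OF t] lam_le[OF t] B_le abs_ge_zero[of m] abs_ge_zero[of "rho t"]
    unfolding R_def by fastforce
  then show ?thesis by blast
qed

(* Riccati substitution: lam_1 = v'/v turns the equation for lam_1 into the linear equation
   v'' = K (rho - cb) v. *)
definition v :: "real \<Rightarrow> real" where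
  "v t = exp (integral {0..t} (lam 1))"

lemma v_pos: "0 < v t"
  by (simp add: v_def)

lemma v_init: "v 0 = 1"
  by (simp add: v_def)

lemma v_deriv: "t \<in> {0..<T} \<Longrightarrow> (v has_real_derivative lam 1 t * v t) (at t within {0..<T})"
  unfolding v_def[abs_def]
  by (rule DERIV_cong[OF DERIV_chain2[OF DERIV_exp integral_has_real_derivative_within
        [OF continuous_on_lam[OF first_index]]]]) auto

lemma lam_first_v_deriv:
  "t \<in> {0..<T} \<Longrightarrow>
    ((\<lambda>s. lam 1 s * v s) has_real_derivative K * (rho t - cb) * v t) (at t within {0..<T})"
  by (rule DERIV_cong[OF DERIV_mult[OF lam_deriv[OF _ first_index] v_deriv]])
    (simp_all add: algebra_simps power2_eq_square)

lemma lam_first_v_deriv_ge: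
  assumes t: "t \<in> {0..<T}"
  shows "- (K * cb) * v t \<le> K * (rho t - cb) * v t"
proof (rule mult_right_mono)
  show "- (K * cb) \<le> K * (rho t - cb)"
    using mult_nonneg_nonneg[OF K_nonneg less_imp_le[OF rho_pos[OF t]]] by (simp add: algebra_simps)
qed (use v_pos less_imp_le in blast)

lemma rho_v_pow_le:
  assumes t: "t \<in> {0..<T}"
  shows "rho t * v t ^ n \<le> rho0"
proof -
  have "real n * integral {0..t} (lam 1) \<le> integral {0..t} (\<lambda>s. \<Sum>i=1..n. lam i s)"
    unfolding integral_mult_right[symmetric]
  proof (rule integral_le)
    show "(\<lambda>s. real n * lam 1 s) integrable_on {0..t}" "(\<lambda>s. \<Sum>i=1..n. lam i s) integrable_on {0..t}"
      using continuous_on_lam[OF first_index] continuous_on_sum_lam t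
      by (auto intro!: integrable_on_initial_segment continuous_intros)
    show "real n * lam 1 s \<le> (\<Sum>i=1..n. lam i s)" if "s \<in> {0..t}" for s
      using sum_lam_ge[of s] that t by auto
  qed
  moreover have "integral {0..t} (\<lambda>s. - (\<Sum>i=1..n. lam i s)) =
      - integral {0..t} (\<lambda>s. \<Sum>i=1..n. lam i s)"
    by (rule integral_neg)
  ultimately show ?thesis
    using rho_eq[OF t] rho0_pos by (simp add: v_def flip: exp_of_nat_mult exp_add)
qed

lemma v_le_of_lam_first_le:
  assumes B: "\<And>s. s \<in> {0..<T} \<Longrightarrow> lam 1 s \<le> B" and t: "t \<in> {0..<T}"
  shows "v t \<le> exp (\<bar>B\<bar> * T)"
proof -
  have "integral {0..t} (lam 1) \<le> integral {0..t} (\<lambda>_. \<bar>B\<bar>)"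
  proof (rule integral_le)
    show "lam 1 integrable_on {0..t}"
      using continuous_on_lam[OF first_index] t by (rule integrable_on_initial_segment)
    show "lam 1 s \<le> \<bar>B\<bar>" if "s \<in> {0..t}" for s
    proof -
      have "s \<in> {0..<T}" using that t by auto
      then show ?thesis using B abs_ge_self[of B] by (meson order_trans)
    qed
  qed auto
  also have "\<dots> = \<bar>B\<bar> * t" using t by simp
  also have "\<dots> \<le> \<bar>B\<bar> * T" using t by (intro mult_left_mono) auto
  finally show ?thesis by (simp add: v_def)
qed

lemma lam_first_v_ge_of_v_le:
  assumes V: "\<And>s. s \<in> {0..<T} \<Longrightarrow> v s \<le> V" and t: "t \<in> {0..<T}"
  shows "lam0 1 - K * cb * V * T \<le> lam 1 t * v t"
proof -
  have "lam 1 0 * v 0 + K * cb * V * 0 \<le> lam 1 t * v t + K * cb * V * t"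
  proof (rule has_real_derivative_nonneg_imp_le[where f="\<lambda>s. lam 1 s * v s + K * cb * V * s"
        and S="{0..<T}"])
    show "((\<lambda>s. lam 1 s * v s + K * cb * V * s) has_real_derivative
        K * (rho x - cb) * v x + K * cb * V)
        (at x within {0..<T})" if "x \<in> {0..t}" for x
    proof -
      have "((\<lambda>s. K * cb * V * s) has_real_derivative K * cb * V) (at x within {0..<T})"
        by (auto intro!: derivative_eq_intros)
      then show ?thesis using that t by (intro DERIV_add lam_first_v_deriv) auto
    qed
    show "0 \<le> K * (rho x - cb) * v x + K * cb * V" if "x \<in> {0<..<t}" for x
    proof -
      have x: "x \<in> {0..<T}" using that t by auto
      have "K * cb * v x \<le> K * cb * V"
        using V[OF x] K_nonneg cb_nonneg by (intro mult_left_mono) auto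
      moreover have "- (K * cb) * v x = - (K * cb * v x)" by simp
      ultimately show ?thesis using lam_first_v_deriv_ge[OF x] by linarith
    qed
  qed (use t in auto)
  moreover have "K * cb * V * t \<le> K * cb * V * T"
    using t V[of 0] v_init K_nonneg cb_nonneg by (intro mult_left_mono) auto
  ultimately show ?thesis using lam_init[OF first_index] v_init by simp
qed

lemma lam_first_ge_of_v_ge:
  assumes \<delta>: "0 < \<delta>" and v_ge: "\<And>t. t \<in> {0..<T} \<Longrightarrow> \<delta> \<le> v t"
  shows "\<exists>m. \<forall>t\<in>{0..<T}. m \<le> lam 1 t"
proof -
  define P where "P = rho0 / \<delta> ^ n"
  have "rho t \<le> P" if t: "t \<in> {0..<T}" for t
  proof -
    have "rho t * \<delta> ^ n \<le> rho t * v t ^ n"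
      using rho_pos[OF t] v_ge[OF t] \<delta> by (intro mult_left_mono power_mono) auto
    then show ?thesis using rho_v_pow_le[OF t] \<delta> by (simp add: P_def field_simps)
  qed
  then have "lam 1 t \<le> max (lam0 1) (sqrt (K * P))" if "t \<in> {0..<T}" for t
    using lam_le_of_rho_le first_index that by blast
  then have "v t \<le> exp (\<bar>max (lam0 1) (sqrt (K * P))\<bar> * T)" if "t \<in> {0..<T}" for t
    using v_le_of_lam_first_le that by blast
  then obtain C where C: "\<And>t. t \<in> {0..<T} \<Longrightarrow> C \<le> lam 1 t * v t"
    using lam_first_v_ge_of_v_le by blast
  have "min 0 (C / \<delta>) \<le> lam 1 t" if t: "t \<in> {0..<T}" for t
  proof (cases "0 \<le> lam 1 t")
    case False
    then have "lam 1 t * v t \<le> lam 1 t * \<delta>" using v_ge[OF t] by (intro mult_left_mono_neg) auto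
    then have "C \<le> lam 1 t * \<delta>" using C[OF t] by linarith
    then have "C / \<delta> \<le> lam 1 t" using \<delta> by (simp add: pos_divide_le_eq)
    then show ?thesis by simp
  qed simp
  then show ?thesis by blast
qed

end

locale maximal_riccati_solution = riccati_solution +
  assumes maximal: "maximal_solution n k cb rho0 lam0 T lam rho"
begin

lemma lam_first_unbounded_below: "\<exists>t\<in>{0..<T}. lam 1 t < m"
proof (rule ccontr)
  assume "\<not> ?thesis"
  then obtain R where "\<forall>t\<in>{0..<T}. \<bar>rho t\<bar> \<le> R \<and> (\<forall>i\<in>{1..n}. \<bar>lam i t\<bar> \<le> R)"
    using bounded_of_lam_first_ge[of m] by (meson not_le)
  then show False using maximal_solution_unbounded[OF maximal k_nonneg] by blast
qed

lemma v_gets_small: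
  assumes t0: "t0 \<in> {0..<T}" and \<delta>: "0 < \<delta>"
  shows "\<exists>t\<in>{t0..<T}. v t < \<delta>"
proof (rule ccontr)
  assume "\<not> ?thesis"
  then have late: "\<delta> \<le> v t" if "t \<in> {t0..<T}" for t using that by (meson not_le)
  have sub: "{0..t0} \<subseteq> {0..<T}" using t0 by auto
  have "continuous_on {0..t0} v"
    by (rule DERIV_continuous_on[of _ _ "\<lambda>x. lam 1 x * v x"])
      (use DERIV_subset[OF v_deriv sub] sub in blast)
  then obtain s where s: "s \<in> {0..t0}" and early: "\<And>t. t \<in> {0..t0} \<Longrightarrow> v s \<le> v t"
    using continuous_attains_inf[of "{0..t0}" v] t0 by auto
  have "min \<delta> (v s) \<le> v t" if "t \<in> {0..<T}" for t
    using that late[of t] early[of t] by (cases "t \<le> t0") auto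
  then obtain m where "\<forall>t\<in>{0..<T}. m \<le> lam 1 t"
    using lam_first_ge_of_v_ge[of "min \<delta> (v s)"] \<delta> v_pos by auto
  then show False using lam_first_unbounded_below[of m] by auto
qed

lemma lam_first_lt_near_T:
  assumes A: "0 < A" and t: "t \<in> {0..<T}"
    and short: "A * (T - t) \<le> 1/4" "K * cb * (T - t)\<^sup>2 \<le> 1/2"
  shows "lam 1 t < - A"
proof (rule ccontr)
  assume "\<not> lam 1 t < - A"
  obtain t1 where t1: "t1 \<in> {t..<T}" "v t1 < v t / 4"
    using v_gets_small[OF t, of "v t / 4"] v_pos[of t] by auto
  have sub: "{t..t1} \<subseteq> {0..<T}" using t t1 by auto
  have "v t / 2 \<le> v t1"
  proof (rule second_order_no_fast_decay[where v=v and w="\<lambda>s. lam 1 s * v s"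
        and w'="\<lambda>s. K * (rho s - cb) * v s" and a=t and b=t1 and c="K * cb" and A=A])
    fix x assume "x \<in> {t..t1}"
    then have x: "x \<in> {0..<T}" using sub by auto
    show "(v has_real_derivative lam 1 x * v x) (at x within {t..t1})"
      using DERIV_subset[OF v_deriv[OF x] sub] .
    show "((\<lambda>s. lam 1 s * v s) has_real_derivative K * (rho x - cb) * v x) (at x within {t..t1})"
      using DERIV_subset[OF lam_first_v_deriv[OF x] sub] .
    show "- (K * cb) * v x \<le> K * (rho x - cb) * v x" using lam_first_v_deriv_ge[OF x] .
  next
    show "- A * v t \<le> lam 1 t * v t"
      using mult_right_mono[of "- A" "lam 1 t" "v t"] \<open>\<not> lam 1 t < - A\<close> v_pos[of t] by simp
    have "0 \<le> t1 - t" "t1 - t \<le> T - t" using t1 by auto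
    then show "A * (t1 - t) \<le> 1/4" "K * cb * (t1 - t)\<^sup>2 \<le> 1/2"
      using short A K_nonneg cb_nonneg
      by (meson mult_left_mono order_trans power_mono less_imp_le mult_nonneg_nonneg)+
  qed (use t1 v_pos A K_nonneg cb_nonneg in auto)
  then show False using t1 v_pos[of t] by simp
qed

lemma lam_first_tendsto_at_bot: "filterlim (lam 1) at_bot (at_left T)"
  unfolding filterlim_at_bot
proof
  fix Z :: real
  define A where "A = \<bar>Z\<bar> + 1"
  have A: "0 < A" by (simp add: A_def)
  have "((\<lambda>t. A * (T - t)) \<longlongrightarrow> 0) (at_left T)"
    by (auto intro!: tendsto_eq_intros)
  then have "eventually (\<lambda>t. A * (T - t) < 1/4) (at_left T)"
    by (rule order_tendstoD) simp
  moreover have "((\<lambda>t. K * cb * (T - t)\<^sup>2) \<longlongrightarrow> 0) (at_left T)"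
    by (auto intro!: tendsto_eq_intros)
  then have "eventually (\<lambda>t. K * cb * (T - t)\<^sup>2 < 1/2) (at_left T)"
    by (rule order_tendstoD) simp
  moreover have "eventually (\<lambda>t. t \<in> {0<..<T}) (at_left T)"
    using T_pos by (rule eventually_at_left_real)
  ultimately show "eventually (\<lambda>t. lam 1 t \<le> Z) (at_left T)"
  proof eventually_elim
    case (elim t)
    then have "lam 1 t < - A" using A by (intro lam_first_lt_near_T) auto
    then show ?case by (simp add: A_def)
  qed
qed

end

theorem proposition2p3:
  fixes n :: nat and k cb rho0 tB :: real
    and lam0 :: "nat \<Rightarrow> real"
    and lam :: "nat \<Rightarrow> real \<Rightarrow> real" and rho :: "real \<Rightarrow> real"
  assumes "n \<ge> 2" and "k > 0" and "cb > 0" and "rho0 > 0"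
    and "\<And>i j. 1 \<le> i \<Longrightarrow> i \<le> j \<Longrightarrow> j \<le> n \<Longrightarrow> lam0 i \<le> lam0 j"
    and "0 < tB"
    and "maximal_solution n k cb rho0 lam0 tB lam rho"
  shows "\<exists>J1 J2. 1 \<le> J1 \<and> J1 \<le> J2 \<and> J2 \<le> n \<and>
           (\<forall>i\<in>{1..J1}. filterlim (lam i) at_bot (at_left tB)) \<and>
           (\<forall>i\<in>{J2<..n}. filterlim (lam i) at_top (at_left tB))"
proof -
  interpret maximal_riccati_solution n k cb rho0 lam0 tB lam rho
    using assms by unfold_locales (auto simp: maximal_solution_def)
  show ?thesis
    using lam_first_tendsto_at_bot \<open>n \<ge> 2\<close> by (intro exI[of _ 1] exI[of _ n]) auto
qed

end
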